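(* Let $\mathbb{X},\mathbb{Y}$ be real Banach spaces such that $\operatorname{Sm}\mathbb{X}$ and $\operatorname{Sm}\mathbb{Y}$ are dense $G_\delta$ subsets of $\mathbb{X}$ and $\mathbb{Y}$ respectively. If a bijective bounded linear operator $T:\mathbb{X}\to\mathbb{Y}$ preserves Birkhoff–James orthogonality at each point of $\operatorname{Sm}\mathbb{X}\cap T^{-1}(\operatorname{Sm}\mathbb{Y})$, then $T$ is a scalar multiple of an isometry, i.e. there is a constant $\lambda>0$ with $\|Tx\|=\lambda\|x\|$ for all $x\in\mathbb{X}$.
   Context: $u\perp_B v$ means $\|u+\lambda v\|\ge\|u\|$ for all real $\lambda$. $T$ preserves Birkhoff–James orthogonality at $x$ if $x\perp_B v$ implies $Tx\perp_B Tv$ for all $v$. For non-zero $z$, $J(z)=\{f\in\mathbb{X}^*:\|f\|=1,\ f(z)=\|z\|\}$; $z$ is smooth if $J(z)$ is a singleton; $\operatorname{Sm}\mathbb{X}$ is the set of smooth points. *)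

theory Defs
  imports "HOL-Analysis.Analysis"
begin

definition bj_orth :: "'a::real_normed_vector \<Rightarrow> 'a \<Rightarrow> bool" where
  "bj_orth u v \<longleftrightarrow> (\<forall>l::real. norm (u + l *\<^sub>R v) \<ge> norm u)"

definition preserves_bj_at :: "('a::real_normed_vector \<Rightarrow> 'b::real_normed_vector) \<Rightarrow> 'a \<Rightarrow> bool" where
  "preserves_bj_at T x \<longleftrightarrow> (\<forall>v. bj_orth x v \<longrightarrow> bj_orth (T x) (T v))"

definition supp_funcs :: "'a::real_normed_vector \<Rightarrow> ('a \<Rightarrow>\<^sub>L real) set" where
  "supp_funcs z = {f. norm f = 1 \<and> blinfun_apply f z = norm z}"

definition smooth_point :: "'a::real_normed_vector \<Rightarrow> bool" where
  "smooth_point z \<longleftrightarrow> z \<noteq> 0 \<and> (\<exists>f. supp_funcs z = {f})"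

definition smooth_points :: "'a::real_normed_vector set" where
  "smooth_points = {z. smooth_point z}"

end

theory Submission
  imports Defs
begin

text \<open>
  Write \<open>D(u, w)\<close> for the right derivative of the norm at \<open>u\<close> in direction \<open>w\<close> and
  \<open>R x = \<parallel>T x\<parallel> / \<parallel>x\<parallel>\<close>. If \<open>T\<close> preserves orthogonality at \<open>y\<close> and \<open>f\<close> supports \<open>y\<close>, then
  \<open>y\<close> is orthogonal to \<open>ker f\<close>, hence \<open>T y\<close> to \<open>T (ker f)\<close>, and this gives
  \<open>R y \<cdot> f \<le> \<parallel>T _\<parallel>\<close>. By Baire the points \<open>y\<close> with \<open>y\<close> and \<open>T y\<close> smooth are dense, so
  \<open>p + s v\<close> can be approximated by them to within \<open>s\<^sup>2\<close>; squeezing the difference quotients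
  of the norm with their supporting functionals \<open>f\<close> resp. \<open>R y \<cdot> f\<close> yields
  \<open>D(T p, T v) = R p \<cdot> D(p, v)\<close>. Therefore \<open>R\<close> has derivative \<open>0\<close> along every segment
  avoiding the origin, and is constant. Smoothness is only used to supply supporting
  functionals, so no Hahn-Banach theorem is needed.
\<close>

definition norm_diff_quot :: "'a::real_normed_vector \<Rightarrow> 'a \<Rightarrow> real \<Rightarrow> real" where
  "norm_diff_quot u w s = (norm (u + s *\<^sub>R w) - norm u) / s"

definition norm_dir_deriv :: "'a::real_normed_vector \<Rightarrow> 'a \<Rightarrow> real" where
  "norm_dir_deriv u w = Inf (norm_diff_quot u w ` {0<..})"

lemma norm_diff_quot_mono:
  assumes "0 < s" "s \<le> s'"
  shows "norm_diff_quot u w s \<le> norm_diff_quot u w s'"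
proof -
  define th where "th = s / s'"
  have s': "0 < s'" using assms by simp
  have th: "0 < th" "th \<le> 1" using assms by (auto simp: th_def)
  have "u + s *\<^sub>R w = (1 - th) *\<^sub>R u + th *\<^sub>R (u + s' *\<^sub>R w)"
    using s' by (simp add: th_def algebra_simps)
  then have "norm (u + s *\<^sub>R w) \<le> (1 - th) * norm u + th * norm (u + s' *\<^sub>R w)"
    using th by (metis (no_types, opaque_lifting) abs_of_nonneg diff_ge_0_iff_ge less_imp_le
        norm_scaleR norm_triangle_ineq)
  then have "norm (u + s *\<^sub>R w) - norm u \<le> th * (norm (u + s' *\<^sub>R w) - norm u)"
    by (simp add: algebra_simps)
  then have "(norm (u + s *\<^sub>R w) - norm u) / s \<le> th * (norm (u + s' *\<^sub>R w) - norm u) / s"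
    using assms by (simp add: divide_right_mono)
  also have "\<dots> = (norm (u + s' *\<^sub>R w) - norm u) / s'"
    using assms s' by (simp add: th_def)
  finally show ?thesis by (simp add: norm_diff_quot_def)
qed

lemma norm_diff_quot_ge:
  assumes "0 < s" shows "- norm w \<le> norm_diff_quot u w s"
proof -
  have "norm u \<le> norm (u + s *\<^sub>R w) + s * norm w"
    using norm_triangle_ineq4[of "u + s *\<^sub>R w" "s *\<^sub>R w"] assms by simp
  then show ?thesis using assms by (simp add: norm_diff_quot_def le_divide_eq mult.commute)
qed

lemma tendsto_norm_diff_quot: "(norm_diff_quot u w \<longlongrightarrow> norm_dir_deriv u w) (at_right 0)"
proof (rule tendstoI)
  fix e :: real assume e: "0 < e"
  have bdd: "bdd_below (norm_diff_quot u w ` {0<..})"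
    using norm_diff_quot_ge by (intro bdd_belowI[of _ "- norm w"]) auto
  obtain s1 where s1: "0 < s1" "norm_diff_quot u w s1 < norm_dir_deriv u w + e"
    using cInf_lessD[of "norm_diff_quot u w ` {0<..}" "norm_dir_deriv u w + e"] e
    unfolding norm_dir_deriv_def by auto
  show "\<forall>\<^sub>F s in at_right 0. dist (norm_diff_quot u w s) (norm_dir_deriv u w) < e"
    unfolding eventually_at_right[OF s1(1)]
  proof (intro exI[of _ s1] conjI allI impI)
    fix s assume "0 < s" "s < s1"
    then have "norm_dir_deriv u w \<le> norm_diff_quot u w s" "norm_diff_quot u w s \<le> norm_diff_quot u w s1"
      unfolding norm_dir_deriv_def using bdd by (auto intro!: cInf_lower norm_diff_quot_mono)
    then show "dist (norm_diff_quot u w s) (norm_dir_deriv u w) < e"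
      using s1 e by (simp add: dist_real_def)
  qed (use s1 in auto)
qed

lemma dominated_functional_bounds:
  fixes L :: "'a::real_normed_vector \<Rightarrow> 'b::real_normed_vector" and \<phi> :: "'a \<Rightarrow> real"
  assumes L: "bounded_linear L" and ph: "bounded_linear \<phi>"
    and le: "\<And>z. \<phi> z \<le> norm (L z)" and eq: "\<phi> y = norm (L y)"
    and s: "0 < s" and err: "norm (L (y - p - s *\<^sub>R v)) \<le> B * s"
  shows "norm_diff_quot (L p) (L v) s - 2 * B \<le> \<phi> v"
    and "\<phi> v \<le> 2 * norm_diff_quot (L p) (L v) (2 * s) - norm_diff_quot (L p) (L v) s + 2 * B"
proof -
  interpret L: bounded_linear L by fact
  interpret ph: bounded_linear \<phi> by fact
  define e where "e = y - p - s *\<^sub>R v"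
  have y: "y = p + s *\<^sub>R v + e" by (simp add: e_def)
  have ph_e: "\<bar>\<phi> e\<bar> \<le> B * s"
    using le[of e] le[of "- e"] err by (simp add: e_def[symmetric] ph.neg L.neg)
  have Ly: "norm (L p + s *\<^sub>R L v) - norm (L e) \<le> norm (L y)"
    using norm_triangle_ineq4[of "L p + s *\<^sub>R L v + L e" "L e"] by (simp add: y L.add L.scaleR)
  have phy: "\<phi> y = \<phi> p + s * \<phi> v + \<phi> e" by (simp add: y ph.add ph.scaleR)
  have p: "\<phi> p \<le> norm (L p)" by (rule le)
  have p2: "\<phi> p + 2 * s * \<phi> v \<le> norm (L p + (2 * s) *\<^sub>R L v)"
    using le[of "p + (2 * s) *\<^sub>R v"] by (simp add: ph.add ph.scaleR L.add L.scaleR)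
  have q1: "s * norm_diff_quot (L p) (L v) s = norm (L p + s *\<^sub>R L v) - norm (L p)"
    and q2: "(2 * s) * norm_diff_quot (L p) (L v) (2 * s) = norm (L p + (2 * s) *\<^sub>R L v) - norm (L p)"
    using s by (simp_all add: norm_diff_quot_def)
  have "s * (norm_diff_quot (L p) (L v) s - 2 * B) \<le> s * \<phi> v"
    using q1 Ly phy eq p err ph_e unfolding e_def by (simp add: algebra_simps)
  then show "norm_diff_quot (L p) (L v) s - 2 * B \<le> \<phi> v"
    using s mult_left_le_imp_le by blast
  \<comment> \<open>For the upper bound compare \<open>y \<approx> p + s v\<close> with \<open>p + 2 s v\<close>, where \<open>\<phi>\<close> is again dominated.\<close>
  have "s * \<phi> v \<le> s * (2 * norm_diff_quot (L p) (L v) (2 * s) - norm_diff_quot (L p) (L v) s + 2 * B)"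
    using q1 q2 Ly phy eq p2 err ph_e unfolding e_def by (simp add: algebra_simps)
  then show "\<phi> v \<le> 2 * norm_diff_quot (L p) (L v) (2 * s) - norm_diff_quot (L p) (L v) s + 2 * B"
    using s mult_left_le_imp_le by blast
qed

lemma tendsto_dominated_functional_norm_dir_deriv:
  fixes L :: "'a::real_normed_vector \<Rightarrow> 'b::real_normed_vector"
  assumes L: "bounded_linear L" and ph: "\<And>n. bounded_linear (\<phi> n)"
    and le: "\<And>n z. \<phi> n z \<le> norm (L z)" and eq: "\<And>n. \<phi> n (y n) = norm (L (y n))"
    and s: "filterlim s (at_right 0) sequentially"
    and close: "\<And>n. norm (y n - p - s n *\<^sub>R v) \<le> s n * s n"
  shows "(\<lambda>n. \<phi> n v) \<longlonglongrightarrow> norm_dir_deriv (L p) (L v)"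
proof -
  obtain K where K: "0 \<le> K" "\<And>z. norm (L z) \<le> norm z * K"
    using bounded_linear.nonneg_bounded[OF L] by blast
  have err: "norm (L (y n - p - s n *\<^sub>R v)) \<le> (K * s n) * s n" for n
    using K(2)[of "y n - p - s n *\<^sub>R v"] mult_right_mono[OF close[of n] K(1)]
    by (simp add: mult_ac)
  have pos: "\<forall>\<^sub>F n in sequentially. 0 < s n" and s0: "s \<longlonglongrightarrow> 0"
    using s by (auto simp: filterlim_at elim: eventually_mono)
  have "filterlim (\<lambda>n. 2 * s n) (at_right 0) sequentially"
    using pos tendsto_mult_right_zero[OF s0, of 2]
    by (auto simp: filterlim_at elim: eventually_mono)
  then have q1: "(\<lambda>n. norm_diff_quot (L p) (L v) (s n)) \<longlonglongrightarrow> norm_dir_deriv (L p) (L v)"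
    and q2: "(\<lambda>n. norm_diff_quot (L p) (L v) (2 * s n)) \<longlonglongrightarrow> norm_dir_deriv (L p) (L v)"
    using filterlim_compose[OF tendsto_norm_diff_quot] s by blast+
  have Ks: "(\<lambda>n. 2 * (K * s n)) \<longlonglongrightarrow> 0"
    using tendsto_mult_right_zero[OF tendsto_mult_right_zero[OF s0, of K], of 2] .
  show ?thesis
  proof (rule tendsto_sandwich)
    show "\<forall>\<^sub>F n in sequentially. norm_diff_quot (L p) (L v) (s n) - 2 * (K * s n) \<le> \<phi> n v"
      using pos by eventually_elim (rule dominated_functional_bounds(1)[OF L ph le eq _ err])
    show "\<forall>\<^sub>F n in sequentially. \<phi> n v \<le>
        2 * norm_diff_quot (L p) (L v) (2 * s n) - norm_diff_quot (L p) (L v) (s n) + 2 * (K * s n)"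
      using pos by eventually_elim (rule dominated_functional_bounds(2)[OF L ph le eq _ err])
    show "(\<lambda>n. norm_diff_quot (L p) (L v) (s n) - 2 * (K * s n)) \<longlonglongrightarrow> norm_dir_deriv (L p) (L v)"
      using tendsto_diff[OF q1 Ks] by simp
    show "(\<lambda>n. 2 * norm_diff_quot (L p) (L v) (2 * s n) - norm_diff_quot (L p) (L v) (s n) + 2 * (K * s n))
        \<longlonglongrightarrow> norm_dir_deriv (L p) (L v)"
      using tendsto_add[OF tendsto_diff[OF tendsto_mult_left[OF q2, of 2] q1] Ks] by simp
  qed
qed

lemma supp_funcs_le_norm: "f \<in> supp_funcs z \<Longrightarrow> blinfun_apply f x \<le> norm x"
  using norm_blinfun[of f x] by (auto simp: supp_funcs_def)

lemma preserves_bj_at_supp_funcs_bound: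
  fixes T :: "'a::real_normed_vector \<Rightarrow> 'b::real_normed_vector"
  assumes T: "bounded_linear T" and y: "y \<noteq> 0" and pres: "preserves_bj_at T y"
    and f: "f \<in> supp_funcs y"
  shows "(norm (T y) / norm y) * f z \<le> norm (T z)"
proof (cases "f z \<le> 0")
  case True
  then show ?thesis
    by (metis divide_nonneg_nonneg mult_nonneg_nonpos norm_ge_zero order_trans)
next
  case False
  interpret T: bounded_linear T by fact
  define a where "a = f z"
  have a: "0 < a" using False by (simp add: a_def)
  have fy: "f y = norm y" using f by (simp add: supp_funcs_def)
  define w where "w = (norm y / a) *\<^sub>R z - y"
  have fw: "f w = 0"
    using a by (simp add: w_def blinfun.diff_right blinfun.scaleR_right fy a_def[symmetric])
  have "bj_orth y w"
    unfolding bj_orth_def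
  proof
    fix l :: real
    have "f (y + l *\<^sub>R w) = norm y" by (simp add: blinfun.add_right blinfun.scaleR_right fw fy)
    then show "norm y \<le> norm (y + l *\<^sub>R w)" using supp_funcs_le_norm[OF f] by metis
  qed
  then have "norm (T y) \<le> norm (T y + 1 *\<^sub>R T w)"
    using pres unfolding preserves_bj_at_def bj_orth_def by blast
  also have "T y + 1 *\<^sub>R T w = (norm y / a) *\<^sub>R T z"
    by (simp add: w_def T.diff T.scaleR)
  finally have "norm (T y) * a \<le> norm y * norm (T z)"
    using a by (simp add: field_simps)
  then show ?thesis using a y by (simp add: a_def[symmetric] field_simps)
qed

lemma norm_dir_deriv_image:
  fixes T :: "'a::real_normed_vector \<Rightarrow> 'b::real_normed_vector"
  assumes T: "bounded_linear T" and dense: "closure D = UNIV"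
    and D: "\<And>y. y \<in> D \<Longrightarrow> y \<noteq> 0 \<and> preserves_bj_at T y \<and> supp_funcs y \<noteq> {}"
    and p: "p \<noteq> 0"
  shows "norm_dir_deriv (T p) (T v) = (norm (T p) / norm p) * norm_dir_deriv p v"
proof -
  interpret T: bounded_linear T by fact
  define s where "s n = inverse (real (Suc n))" for n
  have s0: "s \<longlonglongrightarrow> 0" unfolding s_def by (rule LIMSEQ_inverse_real_of_nat)
  have s: "filterlim s (at_right 0) sequentially"
    using s0 by (simp add: filterlim_at s_def)
  have "\<forall>n. \<exists>y\<in>D. dist y (p + s n *\<^sub>R v) < s n * s n"
    using dense closure_approachable[of _ D] by (simp add: s_def)
  then obtain y where y: "\<And>n. y n \<in> D" "\<And>n. dist (y n) (p + s n *\<^sub>R v) < s n * s n"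
    by metis
  have "\<forall>n. \<exists>g. g \<in> supp_funcs (y n)"
    using D[OF y(1)] by blast
  then obtain f where f: "\<And>n. f n \<in> supp_funcs (y n)"
    by (rule choice[THEN exE]) blast
  have close: "norm (y n - p - s n *\<^sub>R v) \<le> s n * s n" for n
    using y(2)[of n] by (simp add: dist_norm algebra_simps)
  define R where "R z = norm (T z) / norm z" for z
  have "(\<lambda>n. f n v) \<longlonglongrightarrow> norm_dir_deriv p v"
    using tendsto_dominated_functional_norm_dir_deriv[OF bounded_linear_ident
        blinfun.bounded_linear_right supp_funcs_le_norm[OF f] _ s close] f
    by (simp add: supp_funcs_def)
  moreover have "y \<longlonglongrightarrow> p"
  proof -
    have "(\<lambda>n. y n - (p + s n *\<^sub>R v)) \<longlonglongrightarrow> 0"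
    proof (rule Lim_null_comparison)
      show "\<forall>\<^sub>F n in sequentially. norm (y n - (p + s n *\<^sub>R v)) \<le> s n * s n"
        using close by (simp add: diff_diff_eq)
      show "(\<lambda>n. s n * s n) \<longlonglongrightarrow> 0"
        using tendsto_mult[OF s0 s0] by simp
    qed
    moreover have "(\<lambda>n. p + s n *\<^sub>R v) \<longlonglongrightarrow> p"
      using tendsto_add[OF tendsto_const[of p] tendsto_scaleR[OF s0 tendsto_const[of v]]] by simp
    ultimately have "(\<lambda>n. (y n - (p + s n *\<^sub>R v)) + (p + s n *\<^sub>R v)) \<longlonglongrightarrow> 0 + p"
      by (rule tendsto_add)
    then show ?thesis by simp
  qed
  then have "(\<lambda>n. R (y n)) \<longlonglongrightarrow> R p"
    unfolding R_def using p by (intro tendsto_intros T.tendsto) auto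
  ultimately have lim1: "(\<lambda>n. R (y n) * f n v) \<longlonglongrightarrow> R p * norm_dir_deriv p v"
    by (intro tendsto_mult)
  have lim2: "(\<lambda>n. R (y n) * f n v) \<longlonglongrightarrow> norm_dir_deriv (T p) (T v)"
  proof (rule tendsto_dominated_functional_norm_dir_deriv[OF T _ _ _ s close])
    show "bounded_linear (\<lambda>z. R (y n) * f n z)" for n
      by (intro bounded_linear_const_mult blinfun.bounded_linear_right)
    show "R (y n) * f n z \<le> norm (T z)" for n z
      unfolding R_def using D[OF y(1)] by (intro preserves_bj_at_supp_funcs_bound[OF T _ _ f]) auto
    show "R (y n) * f n (y n) = norm (T (y n))" for n
      using D[OF y(1)[of n]] f[of n] by (simp add: R_def supp_funcs_def)
  qed
  from LIMSEQ_unique[OF lim2 lim1] show ?thesis by (simp add: R_def)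
qed

lemma tendsto_norm_ratio_quot_at_right:
  fixes T :: "'a::real_normed_vector \<Rightarrow> 'b::real_normed_vector"
  assumes T: "bounded_linear T" and p: "p \<noteq> 0"
    and deriv: "norm_dir_deriv (T p) (T w) = (norm (T p) / norm p) * norm_dir_deriv p w"
  shows "((\<lambda>t. (norm (T (p + t *\<^sub>R w)) / norm (p + t *\<^sub>R w) - norm (T p) / norm p) / t) \<longlongrightarrow> 0)
    (at_right 0)"
proof -
  interpret T: bounded_linear T by fact
  have c: "((\<lambda>t. p + t *\<^sub>R w) \<longlongrightarrow> p) (at_right 0)"
    using tendsto_add[OF tendsto_const[of p] tendsto_scaleR[OF tendsto_ident_at[of 0 "{0<..}"] tendsto_const[of w]]]
    by simp
  have "\<forall>\<^sub>F t in at_right 0. p + t *\<^sub>R w \<noteq> 0 \<and> 0 < t"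
    using tendsto_imp_eventually_ne[OF c p] eventually_at_right_less by (rule eventually_conj)
  then have eq: "\<forall>\<^sub>F t in at_right 0.
      (norm_diff_quot (T p) (T w) t - (norm (T p) / norm p) * norm_diff_quot p w t) / norm (p + t *\<^sub>R w)
      = (norm (T (p + t *\<^sub>R w)) / norm (p + t *\<^sub>R w) - norm (T p) / norm p) / t"
    by eventually_elim (use p in \<open>simp add: norm_diff_quot_def T.add T.scaleR field_simps\<close>)
  have "((\<lambda>t. (norm_diff_quot (T p) (T w) t - (norm (T p) / norm p) * norm_diff_quot p w t)
      / norm (p + t *\<^sub>R w)) \<longlongrightarrow>
      (norm_dir_deriv (T p) (T w) - (norm (T p) / norm p) * norm_dir_deriv p w) / norm p) (at_right 0)"
    using p by (intro tendsto_divide tendsto_diff tendsto_mult tendsto_const tendsto_norm_diff_quot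
        tendsto_norm c) auto
  then show ?thesis
    using deriv tendsto_cong[OF eq] by simp
qed

lemma norm_ratio_has_derivative_0:
  fixes T :: "'a::real_normed_vector \<Rightarrow> 'b::real_normed_vector"
  assumes T: "bounded_linear T" and p: "p \<noteq> 0"
    and deriv: "\<And>w. norm_dir_deriv (T p) (T w) = (norm (T p) / norm p) * norm_dir_deriv p w"
  shows "((\<lambda>t. norm (T (p + t *\<^sub>R v)) / norm (p + t *\<^sub>R v)) has_real_derivative 0) (at 0)"
proof -
  define r where "r t = norm (T (p + t *\<^sub>R v)) / norm (p + t *\<^sub>R v)" for t
  define g where "g t = (r t - r 0) / t" for t
  have right: "(g \<longlongrightarrow> 0) (at_right 0)"
    unfolding g_def r_def using tendsto_norm_ratio_quot_at_right[OF T p deriv] by simp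
  have "(\<lambda>t. g (- t)) = (\<lambda>t. - ((norm (T (p + t *\<^sub>R (- v))) / norm (p + t *\<^sub>R (- v))
      - norm (T p) / norm p) / t))"
    by (simp add: g_def r_def fun_eq_iff)
  then have "((\<lambda>t. g (- t)) \<longlongrightarrow> 0) (at_right (- 0))"
    using tendsto_minus[OF tendsto_norm_ratio_quot_at_right[OF T p deriv, of "- v"]] by simp
  then have "(g \<longlongrightarrow> 0) (at_left 0)"
    by (rule filterlim_at_left_to_right[THEN iffD2])
  then have "(g \<longlongrightarrow> 0) (at 0)"
    using right by (rule filterlim_split_at)
  then show ?thesis
    unfolding has_field_derivative_iff g_def r_def[abs_def] by simp
qed

lemma norm_ratio_eq:
  fixes T :: "'a::real_normed_vector \<Rightarrow> 'b::real_normed_vector"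
  assumes T: "bounded_linear T"
    and deriv: "\<And>p w. p \<noteq> 0 \<Longrightarrow>
      norm_dir_deriv (T p) (T w) = (norm (T p) / norm p) * norm_dir_deriv p w"
    and x0: "x0 \<noteq> 0" and x: "x \<noteq> 0"
  shows "norm (T x) / norm x = norm (T x0) / norm x0"
proof (cases "\<exists>t\<in>{0..1}. x0 + t *\<^sub>R (x - x0) = 0")
  case True
  interpret T: bounded_linear T by fact
  from True obtain t where t: "x0 + t *\<^sub>R (x - x0) = 0"
    by blast
  with x0 have "t \<noteq> 0" by auto
  have "t *\<^sub>R x = (t - 1) *\<^sub>R x0"
    using t by (simp add: algebra_simps)
  with \<open>t \<noteq> 0\<close> have "x = ((t - 1) / t) *\<^sub>R x0"
    by (metis divide_inverse_commute eq_vector_fraction_iff)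
  then show ?thesis
    using x by (auto simp: T.scaleR)
next
  case False
  define \<phi> where "\<phi> t = norm (T (x0 + t *\<^sub>R (x - x0))) / norm (x0 + t *\<^sub>R (x - x0))" for t
  have d: "(\<phi> has_real_derivative 0) (at t)" if "t \<in> {0..1}" for t
  proof -
    define p where "p = x0 + t *\<^sub>R (x - x0)"
    have p: "p \<noteq> 0" using False that by (auto simp: p_def)
    have "(\<lambda>s. \<phi> (s + t)) = (\<lambda>s. norm (T (p + s *\<^sub>R (x - x0))) / norm (p + s *\<^sub>R (x - x0)))"
      by (simp add: fun_eq_iff \<phi>_def p_def algebra_simps)
    then have "((\<lambda>s. \<phi> (s + t)) has_real_derivative 0) (at 0)"
      using norm_ratio_has_derivative_0[OF T p deriv[OF p]] by simp
    then show ?thesis using DERIV_shift[of \<phi> 0 0 t] by simp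
  qed
  have "continuous_on {0..1} \<phi>"
    using d by (intro continuous_at_imp_continuous_on ballI DERIV_isCont) auto
  then have "\<phi> 1 = \<phi> 0"
    using DERIV_isconst_end[of 0 1 \<phi>] d by auto
  then show ?thesis by (simp add: \<phi>_def)
qed

lemma closure_image_ball_contains_ball:
  fixes T :: "'a::real_normed_vector \<Rightarrow> 'b::banach"
  assumes su: "surj T"
  obtains w r n where "0 < r" "ball w r \<subseteq> closure (T ` ball 0 (real (Suc n)))"
proof -
  define C where "C n = closure (T ` ball 0 (real (Suc n)))" for n
  have cover: "\<Union>(range C) = UNIV"
  proof -
    have "y \<in> C n" if "y = T x" "norm x < real n" for y x n
      using that closure_subset unfolding C_def by fastforce
    then show ?thesis
      using su reals_Archimedean2 by (metis UNIV_eq_I UN_I rangeI surjD)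
  qed
  have "\<exists>A\<in>range C. interior A \<noteq> {}"
  proof (rule ccontr)
    assume "\<not> ?thesis"
    then have "euclidean interior_of \<Union>(range C) = {}"
      by (intro Baire_category_alt) (auto simp: completely_metrizable_space_euclidean C_def)
    with cover show False by simp
  qed
  then obtain n w where "w \<in> interior (C n)" by blast
  then obtain r where "0 < r" "ball w r \<subseteq> interior (C n)"
    using open_contains_ball_eq open_interior by blast
  then show thesis
    using that[of r w n] interior_subset unfolding C_def by blast
qed

lemma dense_vimage_open_dense:
  fixes T :: "'a::real_normed_vector \<Rightarrow> 'b::banach"
  assumes T: "bounded_linear T" and su: "surj T" and V: "open V" "closure V = UNIV"
  shows "closure (T -` V) = UNIV"
proof -
  interpret T: bounded_linear T by fact
  obtain w r n where r: "0 < r" and sub: "ball w r \<subseteq> closure (T ` ball 0 (real (Suc n)))"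
    by (rule closure_image_ball_contains_ball[OF su])
  define N where "N = real (Suc n)"
  have N: "0 < N" by (simp add: N_def)
  have "\<exists>x\<in>T -` V. dist x x0 < e" if e: "0 < e" for x0 e
  proof -
    define l where "l = e / N"
    have l: "0 < l" using e N by (simp add: l_def)
    have "\<forall>\<epsilon>>0. \<exists>v\<in>V. dist v (T x0 + l *\<^sub>R w) < \<epsilon>"
      using V(2) by (simp flip: closure_approachable)
    then obtain v where v: "v \<in> V" "dist v (T x0 + l *\<^sub>R w) < l * r"
      using l r by (meson mult_pos_pos)
    obtain \<rho> where \<rho>: "0 < \<rho>" "ball v \<rho> \<subseteq> V"
      using open_contains_ball_eq[OF V(1)] v(1) by blast
    define y where "y = (1 / l) *\<^sub>R (v - T x0)"
    have "y - w = (1 / l) *\<^sub>R (v - (T x0 + l *\<^sub>R w))"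
      using l by (simp add: y_def algebra_simps)
    then have "dist y w = dist v (T x0 + l *\<^sub>R w) / l"
      using l by (simp add: dist_norm)
    then have "dist w y < r"
      using v(2) l by (simp add: divide_less_eq mult.commute dist_commute)
    then have "y \<in> closure (T ` ball 0 N)"
      using sub by (auto simp: N_def)
    then have "\<forall>\<epsilon>>0. \<exists>z\<in>T ` ball 0 N. dist z y < \<epsilon>"
      by (simp only: closure_approachable)
    then obtain z where "z \<in> T ` ball 0 N" "dist z y < \<rho> / l"
      using \<rho> l by (meson divide_pos_pos)
    then obtain b where b: "norm b < N" "dist (T b) y < \<rho> / l"
      by auto
    define x where "x = x0 + l *\<^sub>R b"
    have "T x - v = l *\<^sub>R (T b - y)"
      using l by (simp add: x_def y_def T.add T.scaleR algebra_simps)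
    then have "dist (T x) v = l * dist (T b) y"
      using l by (simp add: dist_norm)
    also have "\<dots> < \<rho>"
      using b(2) l by (simp add: pos_less_divide_eq mult.commute)
    finally have "T x \<in> V"
      using \<rho> by (auto simp: dist_commute)
    moreover have "dist x x0 = l * norm b"
      using l by (simp add: x_def dist_norm)
    then have "dist x x0 < l * N"
      using b(1) l by simp
    then have "dist x x0 < e"
      using N by (simp add: l_def)
    ultimately show ?thesis by blast
  qed
  then have "x0 \<in> closure (T -` V)" for x0
    by (simp add: closure_approachable)
  then show ?thesis by blast
qed

lemma closure_Int_vimage_dense_gdelta:
  fixes T :: "'a::banach \<Rightarrow> 'b::banach"
  assumes T: "bounded_linear T" and su: "surj T"
    and S: "gdelta_in euclidean S" "closure S = UNIV"
    and S': "gdelta_in euclidean S'" "closure S' = UNIV"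
  shows "closure (S \<inter> T -` S') = UNIV"
proof -
  obtain \<U> where U: "countable \<U>" "\<And>U. U \<in> \<U> \<Longrightarrow> open U" "\<Inter>\<U> = S"
    using S(1) by (auto simp: gdelta_in_alt intersection_of_def)
  obtain \<V> where V: "countable \<V>" "\<And>V. V \<in> \<V> \<Longrightarrow> open V" "\<Inter>\<V> = S'"
    using S'(1) by (auto simp: gdelta_in_alt intersection_of_def)
  define \<G> where "\<G> = \<U> \<union> vimage T ` \<V>"
  have "open G \<and> closure G = UNIV" if G: "G \<in> \<G>" for G
  proof (cases "G \<in> \<U>")
    case True
    then have "S \<subseteq> G" using U(3) by blast
    then show ?thesis
      using True U(2) S(2) closure_mono[of S G] by auto
  next
    case False
    then obtain V where V': "V \<in> \<V>" "G = T -` V"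
      using G False by (auto simp: \<G>_def)
    then have "S' \<subseteq> V" using V(3) by blast
    then have "closure V = UNIV"
      using S'(2) closure_mono[of S' V] by auto
    then show ?thesis
      using V' V(2) dense_vimage_open_dense[OF T su] open_vimage[OF _ linear_continuous_on[OF T]]
      by simp
  qed
  then have "euclidean closure_of \<Inter>\<G> = topspace euclidean"
    using U(1) V(1) completely_metrizable_space_euclidean
    by (intro Baire_category) (auto simp: \<G>_def)
  moreover have "\<Inter>\<G> = S \<inter> T -` S'"
    unfolding \<G>_def using U(3) V(3) by auto
  ultimately show ?thesis by simp
qed

theorem mainTheorem5:
  fixes T :: "'a::banach \<Rightarrow> 'b::banach"
  assumes "closure (smooth_points :: 'a set) = UNIV"
    and "gdelta_in euclidean (smooth_points :: 'a set)"
    and "closure (smooth_points :: 'b set) = UNIV"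
    and "gdelta_in euclidean (smooth_points :: 'b set)"
    and "bounded_linear T" and "bij T"
    and "\<forall>x \<in> smooth_points \<inter> T -` smooth_points. preserves_bj_at T x"
  shows "\<exists>c::real > 0. \<forall>x. norm (T x) = c * norm x"
proof -
  note T = assms(5)
  interpret T: bounded_linear T by fact
  have "closure (smooth_points \<inter> T -` smooth_points) = UNIV"
    using closure_Int_vimage_dense_gdelta[OF T bij_is_surj[OF assms(6)] assms(2,1,4,3)] .
  moreover have "y \<noteq> 0 \<and> preserves_bj_at T y \<and> supp_funcs y \<noteq> {}"
    if "y \<in> smooth_points \<inter> T -` smooth_points" for y
    using that assms(7) by (auto simp: smooth_points_def smooth_point_def)
  ultimately have deriv: "norm_dir_deriv (T p) (T w) = (norm (T p) / norm p) * norm_dir_deriv p w"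
    if "p \<noteq> 0" for p w
    using norm_dir_deriv_image[OF T] that by blast
  show ?thesis
  proof (cases "\<exists>x0::'a. x0 \<noteq> 0")
    case True
    then obtain x0 :: 'a where x0: "x0 \<noteq> 0" by blast
    then have "T x0 \<noteq> 0"
      using inj_eq[OF bij_is_inj[OF assms(6)], of x0 0] T.zero by simp
    with x0 have "norm (T x0) / norm x0 > 0" by simp
    moreover have "norm (T x) = norm (T x0) / norm x0 * norm x" for x
      using norm_ratio_eq[OF T deriv x0, of x] by (cases "x = 0") (auto simp: field_simps T.zero)
    ultimately show ?thesis by blast
  next
    case False
    have "norm (T x) = 1 * norm x" for x
    proof -
      have "x = 0" using False by blast
      then show ?thesis by (simp add: T.zero)
    qed
    then show ?thesis by (intro exI[of _ 1]) simp
  qed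
qed

end
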